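(* Let $k,d$ be positive integers with $d\ge k$, and let $\alpha,\beta$ be reals with $\beta>0$ and $0\le\alpha\le d\beta$. Let $e'=(e'_1,\dots,e'_k)\in\{1,2\}^k$, and for $j\in[0:k]$ let $v_2(j)=|\{\ell\le j:e'_\ell=2\}|$ and $v_1(j)=j-v_2(j)$. Define $$F^*(e')=\sum_{j=1}^k\min\Big\{\big(d-(e'_j-1)v_1(j)-(2-e'_j)v_2(j)\big)\beta,\ \alpha\Big\}.$$ If $v_1(k)\ge v_2(k)$, then $$F^*(e')\ge v_1(k)\,\alpha+v_2(k)\min\{(d-v_1(k))\beta,\ \alpha\},$$ with equality if $e'$ is sorted, i.e. if $e'_1=\dots=e'_{v_1(k)}=1$.
   Context: $[a:b]=\{a,\dots,b\}$, $[a]=\{1,\dots,a\}$. *)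

theory Defs
  imports Complex_Main
begin

text \<open>The sequence e' = (e'_1,...,e'_k) is modelled as a function e :: nat => nat,
  of which only the values at indices 1..k are relevant.\<close>

definition v2 :: "(nat \<Rightarrow> nat) \<Rightarrow> nat \<Rightarrow> nat" where
  "v2 e j = card {l \<in> {1..j}. e l = 2}"

definition v1 :: "(nat \<Rightarrow> nat) \<Rightarrow> nat \<Rightarrow> nat" where
  "v1 e j = j - v2 e j"

definition Fstar :: "nat \<Rightarrow> nat \<Rightarrow> real \<Rightarrow> real \<Rightarrow> (nat \<Rightarrow> nat) \<Rightarrow> real" where
  "Fstar k d \<alpha> \<beta> e = (\<Sum>j=1..k. min ((real d - (real (e j) - 1) * real (v1 e j)
        - (2 - real (e j)) * real (v2 e j)) * \<beta>) \<alpha>)"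

end

theory Submission
  imports Defs
begin

text \<open>Write \<open>F\<^sup>*(e') = \<Sum>\<^sub>j min (c\<^sub>j \<beta>) \<alpha>\<close>, where \<open>c\<^sub>j = d - v\<^sub>2(j)\<close> if \<open>e'\<^sub>j = 1\<close> and
  \<open>c\<^sub>j = d - v\<^sub>1(j)\<close> if \<open>e'\<^sub>j = 2\<close>. Every pair consisting of a 1-position and a 2-position is
  counted exactly once in \<open>\<Sum>\<^sub>j (d - c\<^sub>j)\<close>, so \<open>\<Sum>\<^sub>j c\<^sub>j = k d - v\<^sub>1(k) v\<^sub>2(k)\<close>, and when
  \<open>v\<^sub>2(k) \<le> v\<^sub>1(k)\<close> all \<open>c\<^sub>j\<close> lie in \<open>[d - v\<^sub>1(k), d]\<close>. Bounding the concave function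
  \<open>t \<mapsto> min (t \<beta>) \<alpha>\<close> from below on this interval by its chord and summing gives the
  inequality; for a sorted sequence each \<open>c\<^sub>j\<close> is an endpoint of the interval, where the chord
  is exact.\<close>

lemma v2_0 [simp]: "v2 e 0 = 0"
  unfolding v2_def by simp

lemma v1_0 [simp]: "v1 e 0 = 0"
  unfolding v1_def by simp

lemma v2_Suc: "v2 e (Suc j) = v2 e j + (if e (Suc j) = 2 then 1 else 0)"
proof -
  have "{l \<in> {1..Suc j}. e l = 2} =
      (if e (Suc j) = 2 then insert (Suc j) {l \<in> {1..j}. e l = 2} else {l \<in> {1..j}. e l = 2})"
    by (auto simp: le_Suc_eq)
  then show ?thesis
    unfolding v2_def by (simp add: card_insert_disjoint)
qed

lemma v2_le: "v2 e j \<le> j"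
proof -
  have "v2 e j \<le> card {1..j}"
    unfolding v2_def by (rule card_mono) auto
  then show ?thesis by simp
qed

lemma v1_add_v2: "v1 e j + v2 e j = j"
  using v2_le[of e j] unfolding v1_def by simp

lemma v1_Suc: "v1 e (Suc j) = v1 e j + (if e (Suc j) = 2 then 0 else 1)"
  using v2_Suc[of e j] v1_add_v2[of e j] v1_add_v2[of e "Suc j"] by auto

lemma v1_mono: "i \<le> j \<Longrightarrow> v1 e i \<le> v1 e j"
  by (induction j rule: dec_induct) (auto simp: v1_Suc)

lemma v2_mono: "i \<le> j \<Longrightarrow> v2 e i \<le> v2 e j"
  by (induction j rule: dec_induct) (auto simp: v2_Suc)

definition Fstar_coeff :: "nat \<Rightarrow> (nat \<Rightarrow> nat) \<Rightarrow> nat \<Rightarrow> real" where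
  "Fstar_coeff d e j = real d - (real (e j) - 1) * real (v1 e j) - (2 - real (e j)) * real (v2 e j)"

lemma Fstar_eq_sum_coeff: "Fstar k d \<alpha> \<beta> e = (\<Sum>j=1..k. min (Fstar_coeff d e j * \<beta>) \<alpha>)"
  unfolding Fstar_def Fstar_coeff_def ..

lemma Fstar_coeff_1: "e j = 1 \<Longrightarrow> Fstar_coeff d e j = real d - real (v2 e j)"
  unfolding Fstar_coeff_def by simp

lemma Fstar_coeff_2: "e j = 2 \<Longrightarrow> Fstar_coeff d e j = real d - real (v1 e j)"
  unfolding Fstar_coeff_def by simp

lemma sum_Fstar_coeff:
  assumes "\<forall>j\<in>{1..k}. e j \<in> {1, 2}"
  shows "(\<Sum>j=1..k. Fstar_coeff d e j) = real k * real d - real (v1 e k) * real (v2 e k)"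
  using assms
proof (induction k)
  case (Suc k)
  then have IH: "(\<Sum>j=1..k. Fstar_coeff d e j) = real k * real d - real (v1 e k) * real (v2 e k)"
    by simp
  have step: "(\<Sum>j=1..Suc k. Fstar_coeff d e j) = (\<Sum>j=1..k. Fstar_coeff d e j) + Fstar_coeff d e (Suc k)"
    by simp
  from Suc.prems consider "e (Suc k) = 1" | "e (Suc k) = 2" by fastforce
  then show ?case
  proof cases
    case 1
    then show ?thesis unfolding step IH by (simp add: v1_Suc v2_Suc Fstar_coeff_1 algebra_simps)
  next
    case 2
    then show ?thesis unfolding step IH by (simp add: v1_Suc v2_Suc Fstar_coeff_2 algebra_simps)
  qed
qed simp

lemma Fstar_coeff_bounds:
  assumes "j \<in> {1..k}" and "e j \<in> {1, 2}" and "v2 e k \<le> v1 e k"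
  shows "real d - real (v1 e k) \<le> Fstar_coeff d e j" and "Fstar_coeff d e j \<le> real d"
proof -
  have "v1 e j \<le> v1 e k" "v2 e j \<le> v2 e k"
    using assms(1) by (auto intro: v1_mono v2_mono)
  with assms(2,3) show "real d - real (v1 e k) \<le> Fstar_coeff d e j" "Fstar_coeff d e j \<le> real d"
    by (auto simp: Fstar_coeff_1 Fstar_coeff_2)
qed

lemma min_linear_chord:
  fixes a b c \<alpha> \<beta> :: real
  assumes "a \<le> c" and "c \<le> b"
  shows "(b - c) * min (a * \<beta>) \<alpha> + (c - a) * min (b * \<beta>) \<alpha> \<le> (b - a) * min (c * \<beta>) \<alpha>"
proof -
  have "(b - c) * min (a * \<beta>) \<alpha> + (c - a) * min (b * \<beta>) \<alpha> \<le> (b - c) * (a * \<beta>) + (c - a) * (b * \<beta>)"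
    and "(b - c) * min (a * \<beta>) \<alpha> + (c - a) * min (b * \<beta>) \<alpha> \<le> (b - c) * \<alpha> + (c - a) * \<alpha>"
    using assms by (intro add_mono mult_left_mono; simp)+
  moreover have "(b - c) * (a * \<beta>) + (c - a) * (b * \<beta>) = (b - a) * (c * \<beta>)"
    and "(b - c) * \<alpha> + (c - a) * \<alpha> = (b - a) * \<alpha>"
    by (simp_all add: algebra_simps)
  moreover have "(b - a) * min (c * \<beta>) \<alpha> = min ((b - a) * (c * \<beta>)) ((b - a) * \<alpha>)"
    using assms by (simp add: min_mult_distrib_left)
  ultimately show ?thesis by simp
qed

lemma Fstar_lower_bound:
  assumes entries: "\<forall>j\<in>{1..k}. e j \<in> {1, 2}"
    and balanced: "v2 e k \<le> v1 e k"
    and \<alpha>_le: "\<alpha> \<le> real d * \<beta>"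
  shows "real (v1 e k) * \<alpha> + real (v2 e k) * min ((real d - real (v1 e k)) * \<beta>) \<alpha>
    \<le> Fstar k d \<alpha> \<beta> e"
proof (cases "v1 e k = 0")
  case True
  then have "k = 0" using balanced v1_add_v2[of e k] by simp
  then show ?thesis by (simp add: Fstar_def)
next
  case False
  define m where "m = real (v1 e k)"
  define a where "a = real d - m"
  define c where "c = Fstar_coeff d e"
  define fa where "fa = min (a * \<beta>) \<alpha>"
  have m_pos: "m > 0" using False unfolding m_def by simp
  have "(real d - c j) * fa + (c j - a) * \<alpha> \<le> m * min (c j * \<beta>) \<alpha>"
    if "j \<in> {1..k}" for j
    using min_linear_chord[of a "c j" "real d" \<beta> \<alpha>] \<alpha>_le that entries
      Fstar_coeff_bounds[OF that _ balanced]
    unfolding a_def c_def m_def fa_def by (simp add: min_absorb2)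
  then have "(\<Sum>j=1..k. (real d - c j) * fa + (c j - a) * \<alpha>) \<le> m * Fstar k d \<alpha> \<beta> e"
    unfolding Fstar_eq_sum_coeff sum_distrib_left c_def by (rule sum_mono)
  moreover have "(\<Sum>j=1..k. (real d - c j) * fa + (c j - a) * \<alpha>)
      = (real k * real d - (\<Sum>j=1..k. c j)) * fa + ((\<Sum>j=1..k. c j) - real k * a) * \<alpha>"
    by (simp add: sum.distrib sum_subtractf flip: sum_distrib_right)
  moreover have "(real k * real d - (\<Sum>j=1..k. c j)) * fa + ((\<Sum>j=1..k. c j) - real k * a) * \<alpha>
      = m * (m * \<alpha> + real (v2 e k) * fa)"
  proof -
    have sum_c: "(\<Sum>j=1..k. c j) = real k * real d - m * real (v2 e k)"
      using sum_Fstar_coeff[OF entries] unfolding c_def m_def .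
    have "real k = m + real (v2 e k)"
      using v1_add_v2[of e k] unfolding m_def by linarith
    then show ?thesis
      unfolding sum_c a_def by (simp add: algebra_simps)
  qed
  ultimately have "m * (m * \<alpha> + real (v2 e k) * fa) \<le> m * Fstar k d \<alpha> \<beta> e"
    by simp
  then show ?thesis
    using m_pos unfolding m_def a_def fa_def by simp
qed

lemma Fstar_sorted:
  assumes sorted: "\<forall>j\<in>{1..v1 e k}. e j = 1"
    and \<alpha>_le: "\<alpha> \<le> real d * \<beta>"
  shows "Fstar k d \<alpha> \<beta> e
    = real (v1 e k) * \<alpha> + real (v2 e k) * min ((real d - real (v1 e k)) * \<beta>) \<alpha>"
proof -
  define m where "m = v1 e k"
  have m_le: "m \<le> k" using v1_add_v2[of e k] unfolding m_def by simp
  have v2_prefix: "v2 e j = 0" if "j \<le> m" for j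
    using that by (induction j) (auto simp: v2_Suc sorted m_def)
  have head: "min (Fstar_coeff d e j * \<beta>) \<alpha> = \<alpha>" if "j \<in> {1..m}" for j
    using that sorted v2_prefix[of j] \<alpha>_le by (simp add: m_def Fstar_coeff_1)
  have v1_tail: "v1 e j = m" if "m \<le> j" "j \<le> k" for j
    using v1_mono[OF that(1), of e] v1_mono[OF that(2), of e] v1_add_v2[of e m] v2_prefix[of m]
    unfolding m_def by simp
  have tail: "min (Fstar_coeff d e j * \<beta>) \<alpha> = min ((real d - real m) * \<beta>) \<alpha>"
    if "j \<in> {m+1..k}" for j
  proof -
    define i where "i = j - 1"
    have i: "j = Suc i" "m \<le> i" using that unfolding i_def by auto
    have "e j = 2"
      using v1_Suc[of e i] v1_tail[of i] v1_tail[of j] that i by (auto split: if_splits)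
    then show ?thesis using v1_tail[of j] that by (simp add: Fstar_coeff_2)
  qed
  have "{1..k} = {1..m} \<union> {m+1..k}" using m_le by auto
  then have "Fstar k d \<alpha> \<beta> e
      = (\<Sum>j=1..m. min (Fstar_coeff d e j * \<beta>) \<alpha>) + (\<Sum>j=m+1..k. min (Fstar_coeff d e j * \<beta>) \<alpha>)"
    unfolding Fstar_eq_sum_coeff by (simp add: sum.union_disjoint)
  also have "\<dots> = real m * \<alpha> + real (k - m) * min ((real d - real m) * \<beta>) \<alpha>"
    by (simp add: head tail)
  also have "k - m = v2 e k"
    using v1_add_v2[of e k] unfolding m_def by simp
  finally show ?thesis
    unfolding m_def .
qed

theorem lemma2:
  fixes k d :: nat and \<alpha> \<beta> :: real and e :: "nat \<Rightarrow> nat"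
  assumes "k \<ge> 1" and "d \<ge> k"
    and "\<beta> > 0" and "0 \<le> \<alpha>" and "\<alpha> \<le> real d * \<beta>"
    and "\<forall>j\<in>{1..k}. e j \<in> {1, 2}"
    and "v1 e k \<ge> v2 e k"
  shows "Fstar k d \<alpha> \<beta> e \<ge> real (v1 e k) * \<alpha> + real (v2 e k) * min ((real d - real (v1 e k)) * \<beta>) \<alpha>
    \<and> ((\<forall>j\<in>{1..v1 e k}. e j = 1) \<longrightarrow>
         Fstar k d \<alpha> \<beta> e = real (v1 e k) * \<alpha> + real (v2 e k) * min ((real d - real (v1 e k)) * \<beta>) \<alpha>)"
  using Fstar_lower_bound[OF assms(6,7,5)] Fstar_sorted[OF _ assms(5)] by blast

end
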